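(* Let $I$ be an open interval and $f\in C^\infty(I)$ real-valued. Define $$\alpha:=\sup_{t\in I}\limsup_{n\to\infty}\left(\frac{|f^{(n)}(t)|}{n!}\right)^{1/n},\qquad \beta:=\inf_{t\in I}\limsup_{n\to\infty}\left(\frac{|f^{(n)}(t)|}{n!}\right)^{1/n},$$ with values in $[0,\infty]$, and $R:=1/\alpha$, $S:=1/\beta$ (with $1/0=\infty$, $1/\infty=0$). Then for every $t\in I$ with $|t|<R$ the series $\hat f(t)$ converges absolutely, and for every $t\in I$ with $|t|>S$ the series $\hat f(t)$ diverges.
   Context: For a smooth function $f$ on an interval containing the point $t$, $\hat f(t)$ denotes the series $\hat f(t):=\sum_{n=0}^{\infty}\frac{(-1)^n}{n!}\,t^n f^{(n)}(t)$. *)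

theory Defs
  imports "HOL-Analysis.Analysis"
begin

definition smooth_on :: "real set \<Rightarrow> (real \<Rightarrow> real) \<Rightarrow> bool" where
  "smooth_on I f \<longleftrightarrow> (\<forall>n. \<forall>t\<in>I. ((deriv ^^ n) f) differentiable (at t))"

definition taylor_limsup :: "(real \<Rightarrow> real) \<Rightarrow> real \<Rightarrow> ereal" where
  "taylor_limsup f t = limsup (\<lambda>n. ereal ((\<bar>(deriv ^^ n) f t\<bar> / fact n) powr (1 / real n)))"

definition hat_term :: "(real \<Rightarrow> real) \<Rightarrow> real \<Rightarrow> nat \<Rightarrow> real" where
  "hat_term f t n = (-1) ^ n / fact n * t ^ n * (deriv ^^ n) f t"

end

theory Submission
  imports Defs
begin

(* The series  hat f(t) = sum_n (-1)^n f^(n)(t) t^n / n!  is, for fixed t, the power series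
   with coefficients  c_n = (-1)^n f^(n)(t) / n!  evaluated at the point t itself.  By the
   Cauchy-Hadamard formula its radius of convergence is  1 / limsup_n |c_n|^(1/n), i.e. the
   reciprocal of taylor_limsup f t.  Hence hat f(t) converges absolutely when |t| is below
   this pointwise radius and diverges when |t| is above it.
   The theorem follows by comparing the pointwise radius with R and S: since
   beta <= taylor_limsup f t <= alpha for t in I and inversion on [0, infinity] is
   antitone, R <= 1 / taylor_limsup f t <= S. *)

definition hat_coeff :: "(real \<Rightarrow> real) \<Rightarrow> real \<Rightarrow> nat \<Rightarrow> real" where
  "hat_coeff f t n = (-1) ^ n / fact n * (deriv ^^ n) f t"

lemma hat_term_eq_power_series: "hat_term f t = (\<lambda>n. hat_coeff f t n * t ^ n)"
  unfolding hat_term_def hat_coeff_def by auto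

text \<open>The root-test quantity is a limsup of nonnegative numbers; this is needed because
  inversion on extended reals is antitone only on \<open>[0, \<infinity>]\<close>.\<close>
lemma taylor_limsup_nonneg: "0 \<le> taylor_limsup f t"
proof -
  have "0 = limsup (\<lambda>n. 0::ereal)" by (simp add: Limsup_const)
  also have "\<dots> \<le> taylor_limsup f t"
    unfolding taylor_limsup_def by (intro Limsup_mono) auto
  finally show ?thesis .
qed

text \<open>The sequences \<open>root n |c n|\<close> and the \<open>powr\<close> form agree
  for \<open>n > 0\<close>, so their limsups coincide.\<close>
lemma conv_radius_hat_coeff:
  "conv_radius (hat_coeff f t) = inverse (taylor_limsup f t)"
proof -
  have "limsup (\<lambda>n. ereal (root n (norm (hat_coeff f t n)))) = taylor_limsup f t"
    unfolding taylor_limsup_def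
  proof (rule Limsup_eq)
    show "\<forall>\<^sub>F n in sequentially. ereal (root n (norm (hat_coeff f t n)))
        = ereal ((\<bar>(deriv ^^ n) f t\<bar> / fact n) powr (1 / real n))"
      using eventually_gt_at_top[of "0::nat"]
    proof eventually_elim
      case (elim n)
      have "norm (hat_coeff f t n) = \<bar>(deriv ^^ n) f t\<bar> / fact n"
        by (simp add: hat_coeff_def abs_mult)
      with elim show ?case by (simp add: root_powr_inverse)
    qed
  qed
  then show ?thesis by (simp add: conv_radius_def)
qed

lemma hat_abs_summable_inside:
  assumes "ereal \<bar>t\<bar> < inverse (taylor_limsup f t)"
  shows "summable (\<lambda>n. \<bar>hat_term f t n\<bar>)"
  using abs_summable_in_conv_radius[of t "hat_coeff f t"] assms
  by (simp add: conv_radius_hat_coeff hat_term_eq_power_series)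

lemma hat_not_summable_outside:
  assumes "ereal \<bar>t\<bar> > inverse (taylor_limsup f t)"
  shows "\<not> summable (hat_term f t)"
  using not_summable_outside_conv_radius[of "hat_coeff f t" t] assms
  by (simp add: conv_radius_hat_coeff hat_term_eq_power_series)

theorem theorem6:
  fixes I :: "real set" and f :: "real \<Rightarrow> real" and \<alpha> \<beta> R S :: ereal
  assumes "open I" and "is_interval I" and "I \<noteq> {}"
    and "smooth_on I f"
    and "\<alpha> = (SUP t\<in>I. taylor_limsup f t)"
    and "\<beta> = (INF t\<in>I. taylor_limsup f t)"
    and "R = inverse \<alpha>" and "S = inverse \<beta>"
  shows "(\<forall>t\<in>I. ereal \<bar>t\<bar> < R \<longrightarrow> summable (\<lambda>n. \<bar>hat_term f t n\<bar>))
       \<and> (\<forall>t\<in>I. ereal \<bar>t\<bar> > S \<longrightarrow> \<not> summable (hat_term f t))"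
proof safe
  fix t assume "t \<in> I" and "ereal \<bar>t\<bar> < R"
  have "taylor_limsup f t \<le> \<alpha>" using assms(5) \<open>t \<in> I\<close> by (auto intro: SUP_upper)
  then have "R \<le> inverse (taylor_limsup f t)"
    using assms(7) by (simp add: ereal_inverse_antimono taylor_limsup_nonneg)
  with \<open>ereal \<bar>t\<bar> < R\<close> show "summable (\<lambda>n. \<bar>hat_term f t n\<bar>)"
    by (intro hat_abs_summable_inside) simp
next
  fix t assume "t \<in> I" and "ereal \<bar>t\<bar> > S" and "summable (hat_term f t)"
  have "\<beta> \<le> taylor_limsup f t" using assms(6) \<open>t \<in> I\<close> by (auto intro: INF_lower)
  moreover have "0 \<le> \<beta>" using assms(6) by (auto intro: INF_greatest taylor_limsup_nonneg)
  ultimately have "inverse (taylor_limsup f t) \<le> S"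
    using assms(8) by (simp add: ereal_inverse_antimono)
  with \<open>ereal \<bar>t\<bar> > S\<close> have "\<not> summable (hat_term f t)"
    by (intro hat_not_summable_outside) simp
  with \<open>summable (hat_term f t)\<close> show False by contradiction
qed

end
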